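(* Let $\varphi\in\Xi_p$ be such that $\lim_{x\to0}\frac{\phi_p(x)}{\varphi(x)}=\lim_{x\to0}\frac{\sqrt{-x\ln x}}{\varphi(x)}=0$. Let $(\mathbf{x}_n)$ be a sequence in $C_0([0,1],G(\mathbb{R}^d))$ converging pointwise to $\mathbf{x}\in C_0([0,1],G(\mathbb{R}^d))$, and assume $\sup_n\|\mathbf{x}_n\|_{\phi_p}<\infty$. Then $d_\varphi(\mathbf{x}_n,\mathbf{x})\to0$ as $n\to\infty$.
   Context: Fix $d\geq2$, $p\in(2,3)$. $G(\mathbb{R}^d)$ is the set of $g=(g^1,g^2)\in\mathbb{R}^d\oplus(\mathbb{R}^d\otimes\mathbb{R}^d)$ whose symmetric part of $g^2$ is $\frac12g^1\otimes g^1$, with product $g\otimes h=(g^1+h^1,g^2+g^1\otimes h^1+h^2)$, identity $(0,0)=:\exp(0)$, inverse $(g^1,g^2)^{-1}=(-g^1,-g^2+g^1\otimes g^1)$; for $x\in\mathbb{R}^d$, $\exp(x)=(x,\frac12x\otimes x)$; $\|g\|=\inf\{\sum_i|x^i|:x^i\in\mathbb{R}^d,\exp(x^1)\otimes\cdots\otimes\exp(x^n)=g\}$, with its induced topology on $G(\mathbb{R}^d)$. $C_0([0,1],G(\mathbb{R}^d))$: continuous paths with $\mathbf{x}_0=\exp(0)$; $\mathbf{x}_{s,t}=\mathbf{x}_s^{-1}\otimes\mathbf{x}_t$; $d_\varphi(\mathbf{x},\mathbf{y})=\sup_{0\leq s<t\leq1}\|\mathbf{x}_{s,t}^{-1}\otimes\mathbf{y}_{s,t}\|/\varphi(t-s)$;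 $\|\mathbf{x}\|_\psi=\sup_{0\leq s<t\leq1}\|\mathbf{x}_{s,t}\|/\psi(t-s)$. $\Xi_p$: $\varphi:[0,1]\to[0,\infty)$ with $\varphi(0)=0$ and $\varphi^p$ strictly increasing and convex. $\zeta(x)=\frac{1}{2\sqrt2}\int_0^x\sqrt{\log(1+u^{-2})/u}\,du$; $\phi_p$ is the $p$-th root of the smallest convex function on $[0,1]$ dominating $\zeta^p$. *)

theory Defs
  imports "HOL-Analysis.Analysis"
begin

text \<open>Step-2 free nilpotent group over R^d, elements (g1, g2) with g2 a d x d matrix.\<close>

type_synonym 'd grp = "(real ^ 'd) \<times> (real ^ 'd ^ 'd)"

definition tens :: "real ^ 'd \<Rightarrow> real ^ 'd \<Rightarrow> real ^ 'd ^ 'd" where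
  "tens x y = (\<chi> i j. x $ i * y $ j)"

definition inG :: "('d::finite) grp \<Rightarrow> bool" where
  "inG g \<longleftrightarrow> (\<chi> i j. (snd g $ i $ j + snd g $ j $ i) / 2) = (1/2) *\<^sub>R tens (fst g) (fst g)"

definition gmult :: "('d::finite) grp \<Rightarrow> 'd grp \<Rightarrow> 'd grp" where
  "gmult g h = (fst g + fst h, snd g + tens (fst g) (fst h) + snd h)"

definition ginv :: "('d::finite) grp \<Rightarrow> 'd grp" where
  "ginv g = (- fst g, - snd g + tens (fst g) (fst g))"

definition gexp :: "real ^ ('d::finite) \<Rightarrow> 'd grp" where
  "gexp x = (x, (1/2) *\<^sub>R tens x x)"

definition ccnorm :: "('d::finite) grp \<Rightarrow> real" where
  "ccnorm g = Inf {sum_list (map norm xs) | xs. foldr gmult (map gexp xs) (gexp 0) = g}"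

definition ccdist :: "('d::finite) grp \<Rightarrow> 'd grp \<Rightarrow> real" where
  "ccdist g h = ccnorm (gmult (ginv g) h)"

definition C0path :: "(real \<Rightarrow> ('d::finite) grp) \<Rightarrow> bool" where
  "C0path x \<longleftrightarrow> (\<forall>t\<in>{0..1}. inG (x t)) \<and> x 0 = gexp 0 \<and>
     (\<forall>t\<in>{0..1}. \<forall>e>0. \<exists>\<delta>>0. \<forall>s\<in>{0..1}. \<bar>s - t\<bar> < \<delta> \<longrightarrow> ccdist (x t) (x s) < e)"

definition incr :: "(real \<Rightarrow> ('d::finite) grp) \<Rightarrow> real \<Rightarrow> real \<Rightarrow> 'd grp" where
  "incr x s t = gmult (ginv (x s)) (x t)"

definition d_phi :: "(real \<Rightarrow> real) \<Rightarrow> (real \<Rightarrow> ('d::finite) grp) \<Rightarrow> (real \<Rightarrow> 'd grp) \<Rightarrow> ereal" where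
  "d_phi \<phi> x y = (SUP (s,t)\<in>{(s,t). 0 \<le> s \<and> s < t \<and> t \<le> 1}.
      ereal (ccnorm (gmult (ginv (incr x s t)) (incr y s t)) / \<phi> (t - s)))"

definition hnorm :: "(real \<Rightarrow> real) \<Rightarrow> (real \<Rightarrow> ('d::finite) grp) \<Rightarrow> ereal" where
  "hnorm \<psi> x = (SUP (s,t)\<in>{(s,t). 0 \<le> s \<and> s < t \<and> t \<le> 1}.
      ereal (ccnorm (incr x s t) / \<psi> (t - s)))"

definition Xi :: "real \<Rightarrow> (real \<Rightarrow> real) \<Rightarrow> bool" where
  "Xi p \<phi> \<longleftrightarrow> (\<forall>x\<in>{0..1}. \<phi> x \<ge> 0) \<and> \<phi> 0 = 0 \<and>
     strict_mono_on {0..1} (\<lambda>x. \<phi> x powr p) \<and> convex_on {0..1} (\<lambda>x. \<phi> x powr p)"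

definition zeta :: "real \<Rightarrow> real" where
  "zeta x = 1 / (2 * sqrt 2) * integral {0..x} (\<lambda>u. sqrt (ln (1 + 1 / u\<^sup>2) / u))"

definition convex_majorant :: "(real \<Rightarrow> real) \<Rightarrow> real \<Rightarrow> real" where
  "convex_majorant f x = Inf {g x | g. convex_on {0..1} g \<and> (\<forall>y\<in>{0..1}. f y \<le> g y)}"

definition phi_p :: "real \<Rightarrow> real \<Rightarrow> real" where
  "phi_p p x = convex_majorant (\<lambda>y. zeta y powr p) x powr (1 / p)"

end

theory Submission
  imports Defs
begin

text \<open>The bound \<open>\<parallel>x\<^sub>n\<parallel>\<^sub>\<psi> \<le> B\<close>, \<open>\<psi> = phi_p p\<close>, passes to the pointwise limit \<open>x\<close>, so all paths
  share the modulus of continuity \<open>\<omega> = B \<psi>\<close>; and \<open>\<omega> \<longrightarrow> 0\<close> because \<open>\<psi> / \<phi> \<longrightarrow> 0\<close> and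
  \<open>\<phi> \<longrightarrow> 0\<close>. This equicontinuity upgrades the pointwise convergence to uniform convergence
  of \<open>x\<^sub>n(t)\<inverse> x(t)\<close> to the identity. An increment of length \<open>t - s < \<eta>\<close> is handled by
  \<open>d(x\<^sub>n\<^sub>,\<^sub>s\<^sub>t, x\<^sub>s\<^sub>t) \<le> 2 \<omega>(t - s)\<close>, which is small compared with \<open>\<phi>(t - s)\<close>. For
  \<open>t - s \<ge> \<eta>\<close>, \<open>x\<^sub>n\<^sub>,\<^sub>s\<^sub>t\<inverse> x\<^sub>s\<^sub>t\<close> is a conjugate of \<open>x(s)\<inverse> x\<^sub>n(s)\<close> by
  \<open>c = x\<^sub>n\<^sub>,\<^sub>s\<^sub>t\<close> times \<open>x\<^sub>n(t)\<inverse> x(t)\<close>; as \<open>\<parallel>[a, b]\<parallel> \<le> 4 \<surd>(\<bar>a\<bar> \<bar>b\<bar>)\<close>, conjugating \<open>g\<close>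
  by \<open>c\<close> costs at most \<open>4 \<surd>(\<parallel>g\<parallel> \<parallel>c\<parallel>)\<close>, so this part is uniformly small, while
  \<open>\<phi>(t - s) \<ge> \<phi>(\<eta>)\<close>.\<close>

section \<open>The group structure\<close>

lemma tens_add_left: "tens (x + y) z = tens x z + tens y z"
  by (simp add: tens_def vec_eq_iff algebra_simps)

lemma tens_add_right: "tens z (x + y) = tens z x + tens z y"
  by (simp add: tens_def vec_eq_iff algebra_simps)

lemma tens_minus_left: "tens (- x) z = - tens x z"
  by (simp add: tens_def vec_eq_iff)

lemma tens_minus_right: "tens z (- x) = - tens z x"
  by (simp add: tens_def vec_eq_iff)

lemma tens_scaleR_left: "tens (c *\<^sub>R x) z = c *\<^sub>R tens x z"
  by (simp add: tens_def vec_eq_iff)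

lemma tens_scaleR_right: "tens z (c *\<^sub>R x) = c *\<^sub>R tens z x"
  by (simp add: tens_def vec_eq_iff)

lemma tens_zero_left [simp]: "tens 0 z = 0"
  and tens_zero_right [simp]: "tens z 0 = 0"
  by (simp_all add: tens_def vec_eq_iff)

lemmas tens_bilinear = tens_add_left tens_add_right tens_minus_left tens_minus_right
  tens_scaleR_left tens_scaleR_right

lemma gexp_0 [simp]: "gexp 0 = (0, 0)"
  by (simp add: gexp_def)

lemma gmult_assoc: "gmult (gmult g h) k = gmult g (gmult h k)"
  by (simp add: gmult_def tens_bilinear algebra_simps)

lemma gmult_ident_left [simp]: "gmult (0, 0) g = g"
  and gmult_ident_right [simp]: "gmult g (0, 0) = g"
  by (simp_all add: gmult_def)

lemma gmult_ginv_left [simp]: "gmult (ginv g) g = (0, 0)"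
  and gmult_ginv_right [simp]: "gmult g (ginv g) = (0, 0)"
  by (simp_all add: gmult_def ginv_def tens_bilinear)

lemma gmult_ginv_cancel [simp]: "gmult g (gmult (ginv g) h) = h"
  by (simp flip: gmult_assoc)

lemma ginv_ginv [simp]: "ginv (ginv g) = g"
  by (simp add: ginv_def tens_bilinear)

lemma ginv_ident [simp]: "ginv (0, 0) = (0, 0)"
  by (simp add: ginv_def)

lemma ginv_gmult: "ginv (gmult g h) = gmult (ginv h) (ginv g)"
  by (simp add: gmult_def ginv_def tens_bilinear algebra_simps)

lemma ginv_gexp: "ginv (gexp x) = gexp (- x)"
  by (simp add: ginv_def gexp_def tens_bilinear)

lemma gmult_central: "gmult (0, A) (0, B) = (0, A + B)"
  by (simp add: gmult_def)

lemma gexp_commutator: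
  "gmult (gexp x) (gmult (gexp y) (gmult (gexp (- x)) (gexp (- y)))) = (0, tens x y - tens y x)"
  by (simp add: gmult_def gexp_def tens_def vec_eq_iff algebra_simps)

lemma gmult_conj_eq:
  "gmult (ginv c) (gmult g c) = gmult g (0, tens (fst g) (fst c) - tens (fst c) (fst g))"
  by (simp add: gmult_def ginv_def tens_bilinear algebra_simps)

section \<open>The Carnot--Caratheodory norm\<close>

definition word_prod :: "(real ^ ('d::finite)) list \<Rightarrow> 'd grp" where
  "word_prod xs = foldr gmult (map gexp xs) (gexp 0)"

definition word_length :: "(real ^ ('d::finite)) list \<Rightarrow> real" where
  "word_length xs = sum_list (map norm xs)"

lemma word_prod_Nil [simp]: "word_prod [] = (0, 0)"
  and word_prod_Cons [simp]: "word_prod (x # xs) = gmult (gexp x) (word_prod xs)"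
  by (simp_all add: word_prod_def)

lemma word_prod_append: "word_prod (xs @ ys) = gmult (word_prod xs) (word_prod ys)"
  by (induction xs) (simp_all add: gmult_assoc)

lemma word_prod_rev_uminus: "word_prod (rev (map uminus xs)) = ginv (word_prod xs)"
  by (induction xs) (simp_all add: word_prod_append ginv_gmult ginv_gexp)

lemma word_length_Nil [simp]: "word_length [] = 0"
  and word_length_Cons [simp]: "word_length (x # xs) = norm x + word_length xs"
  and word_length_append: "word_length (xs @ ys) = word_length xs + word_length ys"
  and word_length_rev_uminus: "word_length (rev (map uminus xs)) = word_length xs"
  by (simp_all add: word_length_def rev_map[symmetric] sum_list_rev o_def)

lemma word_length_nonneg: "0 \<le> word_length xs"
  by (induction xs) auto

lemma norm_fst_word_prod_le: "norm (fst (word_prod xs)) \<le> word_length xs"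
proof (induction xs)
  case (Cons x xs)
  have "fst (word_prod (x # xs)) = x + fst (word_prod xs)"
    by (simp add: gmult_def gexp_def)
  with Cons show ?case
    using norm_triangle_ineq[of x "fst (word_prod xs)"] by simp
qed simp

lemma ccnorm_eq_Inf_word_length: "ccnorm g = Inf {word_length xs | xs. word_prod xs = g}"
  by (simp add: ccnorm_def word_prod_def word_length_def)

lemma ccnorm_le_word_length: "word_prod xs = g \<Longrightarrow> ccnorm g \<le> word_length xs"
  unfolding ccnorm_eq_Inf_word_length
  by (rule cInf_lower) (auto intro: bdd_belowI[where m=0] simp: word_length_nonneg)

lemma ccnorm_greatest:
  assumes "g \<in> range word_prod" and "\<And>xs. word_prod xs = g \<Longrightarrow> c \<le> word_length xs"
  shows "c \<le> ccnorm g"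
  using assms unfolding ccnorm_eq_Inf_word_length by (auto intro!: cInf_greatest)

lemma ident_in_range_word_prod [simp]: "(0, 0) \<in> range word_prod"
  by (metis rangeI word_prod_Nil)

lemma gexp_in_range_word_prod [simp]: "gexp x \<in> range word_prod"
  by (metis rangeI word_prod_Cons word_prod_Nil gmult_ident_right)

lemma gmult_in_range_word_prod:
  "g \<in> range word_prod \<Longrightarrow> h \<in> range word_prod \<Longrightarrow> gmult g h \<in> range word_prod"
  by (auto simp flip: word_prod_append)

lemma ginv_in_range_word_prod: "g \<in> range word_prod \<Longrightarrow> ginv g \<in> range word_prod"
  by (auto simp flip: word_prod_rev_uminus)

lemma ccnorm_nonneg: "g \<in> range word_prod \<Longrightarrow> 0 \<le> ccnorm g"
  by (rule ccnorm_greatest) (auto simp: word_length_nonneg)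

lemma norm_fst_le_ccnorm: "g \<in> range word_prod \<Longrightarrow> norm (fst g) \<le> ccnorm g"
  by (erule ccnorm_greatest) (metis norm_fst_word_prod_le)

lemma ccnorm_ident [simp]: "ccnorm (0, 0) = 0"
  by (metis antisym ccnorm_le_word_length ccnorm_nonneg ident_in_range_word_prod
      word_length_Nil word_prod_Nil)

lemma ccnorm_gmult_le:
  assumes g: "g \<in> range word_prod" and h: "h \<in> range word_prod"
  shows "ccnorm (gmult g h) \<le> ccnorm g + ccnorm h"
proof -
  have "ccnorm (gmult g h) - ccnorm g \<le> word_length ys" if ys: "word_prod ys = h" for ys
  proof -
    have "ccnorm (gmult g h) - word_length ys \<le> ccnorm g"
    proof (rule ccnorm_greatest[OF g])
      fix xs assume "word_prod xs = g"
      with ys have "ccnorm (gmult g h) \<le> word_length (xs @ ys)"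
        by (intro ccnorm_le_word_length) (simp add: word_prod_append)
      then show "ccnorm (gmult g h) - word_length ys \<le> word_length xs"
        by (simp add: word_length_append)
    qed
    then show ?thesis by simp
  qed
  then have "ccnorm (gmult g h) - ccnorm g \<le> ccnorm h"
    by (rule ccnorm_greatest[OF h])
  then show ?thesis by simp
qed

lemma ccnorm_ginv_le: "g \<in> range word_prod \<Longrightarrow> ccnorm (ginv g) \<le> ccnorm g"
  by (erule ccnorm_greatest) (metis ccnorm_le_word_length word_prod_rev_uminus word_length_rev_uminus)

lemma ccnorm_ginv [simp]: "g \<in> range word_prod \<Longrightarrow> ccnorm (ginv g) = ccnorm g"
  using ccnorm_ginv_le[of g] ccnorm_ginv_le[of "ginv g"] ginv_in_range_word_prod[of g] by simp

lemma commutator_in_range_word_prod: "(0, tens x y - tens y x) \<in> range word_prod"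
  by (metis gexp_commutator gexp_in_range_word_prod gmult_in_range_word_prod)

text \<open>Rescaling \<open>x\<close> by \<open>\<lambda>\<close> and \<open>y\<close> by \<open>1/\<lambda>\<close> leaves the commutator unchanged; the optimal
  \<open>\<lambda>\<close> balances the two lengths.\<close>
lemma ccnorm_commutator_le: "ccnorm (0, tens x y - tens y x) \<le> 4 * sqrt (norm x * norm y)"
proof (cases "x = 0 \<or> y = 0")
  case True
  then show ?thesis by auto
next
  case False
  then have x: "norm x > 0" and y: "norm y > 0" by auto
  define l where "l = sqrt (norm y / norm x)"
  have l: "l > 0" using x y by (simp add: l_def)
  have "word_prod [l *\<^sub>R x, (1/l) *\<^sub>R y, - (l *\<^sub>R x), - ((1/l) *\<^sub>R y)] = (0, tens x y - tens y x)"
    using l gexp_commutator[of "l *\<^sub>R x" "(1/l) *\<^sub>R y"] by (simp add: tens_bilinear)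
  then have "ccnorm (0, tens x y - tens y x)
      \<le> word_length [l *\<^sub>R x, (1/l) *\<^sub>R y, - (l *\<^sub>R x), - ((1/l) *\<^sub>R y)]"
    by (rule ccnorm_le_word_length)
  also have "\<dots> = 2 * (l * norm x) + 2 * (norm y / l)"
    using l by simp
  also have "\<dots> = 4 * sqrt (norm x * norm y)"
  proof -
    have "l * norm x = sqrt (norm x * norm y)" "norm y / l = sqrt (norm x * norm y)"
      using x y by (simp_all add: l_def real_sqrt_divide real_sqrt_mult field_simps)
    then show ?thesis by simp
  qed
  finally show ?thesis .
qed

lemma ccnorm_conj_le:
  assumes g: "g \<in> range word_prod" and c: "c \<in> range word_prod"
  shows "ccnorm (gmult (ginv c) (gmult g c)) \<le> ccnorm g + 4 * sqrt (ccnorm g * ccnorm c)"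
proof -
  have "ccnorm (gmult (ginv c) (gmult g c))
      \<le> ccnorm g + ccnorm ((0, tens (fst g) (fst c) - tens (fst c) (fst g)) :: 'a grp)"
    unfolding gmult_conj_eq by (intro ccnorm_gmult_le g commutator_in_range_word_prod)
  also have "\<dots> \<le> ccnorm g + 4 * sqrt (norm (fst g) * norm (fst c))"
    using ccnorm_commutator_le by simp
  also have "\<dots> \<le> ccnorm g + 4 * sqrt (ccnorm g * ccnorm c)"
    using norm_fst_le_ccnorm[OF g] norm_fst_le_ccnorm[OF c] ccnorm_nonneg[OF g]
    by (simp add: mult_mono)
  finally show ?thesis .
qed

lemma central_sum_in_range_word_prod:
  assumes "finite S" and "\<And>i. i \<in> S \<Longrightarrow> (0, f i) \<in> range word_prod"
  shows "(0, sum f S) \<in> range word_prod"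
  using assms
proof (induction S rule: finite_induct)
  case (insert i S)
  then have "gmult (0, f i) (0, sum f S) \<in> range word_prod"
    by (intro gmult_in_range_word_prod) auto
  with insert show ?case by (simp add: gmult_central)
qed simp

lemma antisymmetric_eq_sum_commutators:
  fixes A :: "real ^ ('d::finite) ^ 'd"
  assumes "\<And>i j. A $ i $ j + A $ j $ i = 0"
  shows "A = (\<Sum>i\<in>UNIV. tens (axis i 1) (\<chi> j. A $ i $ j / 2) - tens (\<chi> j. A $ i $ j / 2) (axis i 1))"
proof -
  have "(\<Sum>i\<in>UNIV. axis i 1 $ k * (A $ i $ l / 2) - A $ i $ k / 2 * axis i 1 $ l) = A $ k $ l"
    for k l
    using assms[of k l]
    by (simp add: sum_subtractf axis_def mult_delta_left mult_delta_right if_distrib[where f="\<lambda>x. x / 2"] cong: if_cong)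
  then show ?thesis by (simp add: vec_eq_iff tens_def)
qed

text \<open>Every element of the group is a finite product of exponentials, so its \<open>ccnorm\<close> is not the
  junk value \<open>Inf {}\<close>: write \<open>g = gexp (fst g) \<otimes> (0, A)\<close> with \<open>A\<close> antisymmetric, and \<open>(0, A)\<close> as
  a product of commutators.\<close>
lemma inG_imp_in_range_word_prod:
  assumes "inG g"
  shows "g \<in> range word_prod"
proof -
  obtain a b where g: "g = (a, b)" by (cases g)
  define A where "A = b - (1/2) *\<^sub>R tens a a"
  have "A $ i $ j + A $ j $ i = 0" for i j
  proof -
    have "(\<chi> i j. (b $ i $ j + b $ j $ i) / 2) $ i $ j = ((1/2) *\<^sub>R tens a a) $ i $ j"
      using assms g by (simp add: inG_def)
    then show ?thesis by (simp add: A_def tens_def)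
  qed
  then have "(0, A) \<in> range word_prod"
    by (subst antisymmetric_eq_sum_commutators)
      (auto intro: central_sum_in_range_word_prod commutator_in_range_word_prod)
  then have "gmult (gexp a) (0, A) \<in> range word_prod"
    by (intro gmult_in_range_word_prod) simp
  moreover have "gmult (gexp a) (0, A) = g"
    by (simp add: g gmult_def gexp_def A_def)
  ultimately show ?thesis by simp
qed

lemma ccnorm_incr_eq_ccdist: "ccnorm (incr y s t) = ccdist (y s) (y t)"
  by (simp add: incr_def ccdist_def)

lemma ccdist_nonneg: "g \<in> range word_prod \<Longrightarrow> h \<in> range word_prod \<Longrightarrow> 0 \<le> ccdist g h"
  unfolding ccdist_def by (intro ccnorm_nonneg gmult_in_range_word_prod ginv_in_range_word_prod)

lemma ccdist_commute:
  assumes "g \<in> range word_prod" "h \<in> range word_prod"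
  shows "ccdist g h = ccdist h g"
proof -
  have "gmult (ginv h) g = ginv (gmult (ginv g) h)"
    by (simp add: ginv_gmult)
  then show ?thesis
    unfolding ccdist_def using assms by (simp add: gmult_in_range_word_prod ginv_in_range_word_prod)
qed

lemma ccdist_triangle:
  assumes "g \<in> range word_prod" "h \<in> range word_prod" "k \<in> range word_prod"
  shows "ccdist g k \<le> ccdist g h + ccdist h k"
proof -
  have "ccdist g k = ccnorm (gmult (gmult (ginv g) h) (gmult (ginv h) k))"
    by (simp add: ccdist_def gmult_assoc)
  also have "\<dots> \<le> ccdist g h + ccdist h k"
    unfolding ccdist_def using assms
    by (intro ccnorm_gmult_le gmult_in_range_word_prod ginv_in_range_word_prod)
  finally show ?thesis .
qed

lemma ccdist_le_of_tendsto:
  assumes in_range: "g \<in> range word_prod" "h \<in> range word_prod"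
    "\<And>n. gs n \<in> range word_prod" "\<And>n. hs n \<in> range word_prod"
    and g: "(\<lambda>n. ccdist (gs n) g) \<longlonglongrightarrow> 0" and h: "(\<lambda>n. ccdist (hs n) h) \<longlonglongrightarrow> 0"
    and bound: "\<And>n. ccdist (gs n) (hs n) \<le> C"
  shows "ccdist g h \<le> C"
proof (rule tendsto_le[OF trivial_limit_sequentially _ tendsto_const])
  show "(\<lambda>n. ccdist (gs n) g + C + ccdist (hs n) h) \<longlonglongrightarrow> C"
    using tendsto_add[OF tendsto_add[OF g tendsto_const] h] by simp
  show "\<forall>\<^sub>F n in sequentially. ccdist g h \<le> ccdist (gs n) g + C + ccdist (hs n) h"
  proof (intro always_eventually allI)
    fix n
    have "ccdist g h \<le> ccdist g (gs n) + ccdist (gs n) (hs n) + ccdist (hs n) h"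
      using in_range ccdist_triangle[of g "gs n" h] ccdist_triangle[of "gs n" "hs n" h] by simp
    then show "ccdist g h \<le> ccdist (gs n) g + C + ccdist (hs n) h"
      using bound[of n] ccdist_commute[of g "gs n"] in_range by simp
  qed
qed

text \<open>The difference of the increments is the conjugate of the small element \<open>a'\<inverse> a\<close> by
  \<open>a\<inverse> b\<close>, times the small element \<open>b\<inverse> b'\<close>.\<close>
lemma ccnorm_increment_difference_le:
  assumes a: "a \<in> range word_prod" and b: "b \<in> range word_prod"
    and a': "a' \<in> range word_prod" and b': "b' \<in> range word_prod"
  shows "ccnorm (gmult (ginv (gmult (ginv a) b)) (gmult (ginv a') b'))
    \<le> ccdist a a' + 4 * sqrt (ccdist a a' * ccdist a b) + ccdist b b'"
proof -
  define c where "c = gmult (ginv a) b"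
  define g where "g = gmult (ginv a') a"
  have c: "c \<in> range word_prod" and g: "g \<in> range word_prod"
    using a b a' by (simp_all add: c_def g_def gmult_in_range_word_prod ginv_in_range_word_prod)
  have "gmult (ginv c) (gmult (ginv a') b') = gmult (gmult (ginv c) (gmult g c)) (gmult (ginv b) b')"
    by (simp add: c_def g_def ginv_gmult gmult_assoc)
  also have "ccnorm \<dots> \<le> ccnorm (gmult (ginv c) (gmult g c)) + ccdist b b'"
    unfolding ccdist_def using b b' c g
    by (intro ccnorm_gmult_le gmult_in_range_word_prod ginv_in_range_word_prod)
  also have "\<dots> \<le> ccnorm g + 4 * sqrt (ccnorm g * ccnorm c) + ccdist b b'"
    using ccnorm_conj_le[OF g c] by simp
  also have "ccnorm g = ccdist a a'"
    using ccdist_commute[OF a' a] by (simp add: g_def ccdist_def)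
  also have "ccnorm c = ccdist a b"
    by (simp add: c_def ccdist_def)
  finally show ?thesis by (simp add: c_def)
qed

lemma ccnorm_increment_difference_le_sum:
  assumes "a \<in> range word_prod" "b \<in> range word_prod" "a' \<in> range word_prod" "b' \<in> range word_prod"
  shows "ccnorm (gmult (ginv (gmult (ginv a) b)) (gmult (ginv a') b')) \<le> ccdist a b + ccdist a' b'"
proof -
  have "ccnorm (gmult (ginv (gmult (ginv a) b)) (gmult (ginv a') b'))
      \<le> ccnorm (ginv (gmult (ginv a) b)) + ccdist a' b'"
    unfolding ccdist_def using assms
    by (intro ccnorm_gmult_le gmult_in_range_word_prod ginv_in_range_word_prod)
  then show ?thesis
    using assms by (simp add: ccdist_def gmult_in_range_word_prod ginv_in_range_word_prod)
qed

lemma tendsto_zero_of_ratio_tendsto_zero: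
  fixes f g :: "'a \<Rightarrow> real"
  assumes "((\<lambda>x. f x / g x) \<longlongrightarrow> 0) F" and "(g \<longlongrightarrow> 0) F" and "\<forall>\<^sub>F x in F. g x \<noteq> 0"
  shows "(f \<longlongrightarrow> 0) F"
proof -
  have "((\<lambda>x. f x / g x * g x) \<longlongrightarrow> 0 * 0) F"
    by (intro tendsto_mult assms(1,2))
  moreover have "\<forall>\<^sub>F x in F. f x / g x * g x = f x"
    using assms(3) by eventually_elim simp
  ultimately show ?thesis
    by (simp add: tendsto_cong)
qed

lemma ereal_LIMSEQ_zeroI:
  fixes u :: "nat \<Rightarrow> ereal"
  assumes nonneg: "\<And>n. 0 \<le> u n"
    and small: "\<And>c. 0 < c \<Longrightarrow> \<forall>\<^sub>F n in sequentially. u n \<le> ereal c"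
  shows "u \<longlonglongrightarrow> 0"
proof (rule order_tendstoI)
  fix a :: ereal assume "a < 0"
  then show "\<forall>\<^sub>F n in sequentially. a < u n"
    using nonneg by (auto intro: always_eventually less_le_trans)
next
  fix a :: ereal assume "0 < a"
  then obtain c where "0 < ereal c" "ereal c < a"
    using ereal_dense2 by blast
  then show "\<forall>\<^sub>F n in sequentially. u n < a"
    using small[of c] by (auto elim: eventually_mono intro: le_less_trans)
qed

lemma grid_point_below:
  assumes "0 < N" and "s \<in> {0..1}"
  obtains k :: nat where "k \<le> N" "real k / N \<le> s" "s - real k / N < 1 / N"
proof
  define k where "k = nat \<lfloor>s * N\<rfloor>"
  have "0 \<le> s * N" and "s * N \<le> N"
    using assms by (auto simp: mult_left_le_one_le)
  then have k: "real k \<le> s * N" "s * N < real k + 1"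
    unfolding k_def by linarith+
  with \<open>s * N \<le> N\<close> show "k \<le> N"
    by linarith
  show "real k / N \<le> s"
    using k assms by (simp add: divide_le_eq mult.commute)
  have "s - real k / N = (s * N - real k) / N"
    using assms by (simp add: field_simps)
  also have "\<dots> < 1 / N"
    using k assms by (intro divide_strict_right_mono) auto
  finally show "s - real k / N < 1 / N" .
qed

text \<open>A grid argument: the modulus is only used to carry bounds from a grid point to the points
  on its right.\<close>
lemma uniform_limit_zero_of_equicontinuous:
  fixes f :: "nat \<Rightarrow> real \<Rightarrow> real" and \<omega> :: "real \<Rightarrow> real"
  assumes nonneg: "\<And>n t. t \<in> {0..1} \<Longrightarrow> 0 \<le> f n t"
    and pointwise: "\<And>t. t \<in> {0..1} \<Longrightarrow> (\<lambda>n. f n t) \<longlonglongrightarrow> 0"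
    and equicontinuous: "\<And>n r s. 0 \<le> r \<Longrightarrow> r < s \<Longrightarrow> s \<le> 1 \<Longrightarrow> f n s \<le> f n r + \<omega> (s - r)"
    and modulus: "(\<omega> \<longlongrightarrow> 0) (at_right 0)"
  shows "uniform_limit {0..1} f (\<lambda>_. 0) sequentially"
proof (rule uniform_limitI)
  fix \<epsilon> :: real assume "0 < \<epsilon>"
  obtain \<eta> where "0 < \<eta>" and \<eta>: "\<And>h. 0 < h \<Longrightarrow> h < \<eta> \<Longrightarrow> \<omega> h < \<epsilon> / 2"
    using order_tendstoD(2)[OF modulus, of "\<epsilon> / 2"] \<open>0 < \<epsilon>\<close>
    by (auto simp: eventually_at_right_field)
  obtain N :: nat where "1 / \<eta> < N"
    using reals_Archimedean2 by blast
  moreover have "0 < real N"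
    using \<open>0 < \<eta>\<close> \<open>1 / \<eta> < N\<close> by (metis order.strict_trans zero_less_divide_1_iff)
  ultimately have N: "0 < N" "1 / real N < \<eta>"
    using \<open>0 < \<eta>\<close> by (simp_all add: divide_less_eq mult.commute)
  have "\<forall>\<^sub>F n in sequentially. \<forall>k \<in> {..N}. f n (real k / N) < \<epsilon> / 2"
    using N \<open>0 < \<epsilon>\<close> by (intro eventually_ball_finite ballI order_tendstoD(2)[OF pointwise]) auto
  then show "\<forall>\<^sub>F n in sequentially. \<forall>s\<in>{0..1}. dist (f n s) 0 < \<epsilon>"
  proof (rule eventually_mono, intro ballI)
    fix n :: nat and s :: real
    assume small: "\<forall>k \<in> {..N}. f n (real k / N) < \<epsilon> / 2" and s: "s \<in> {0..1}"
    obtain k where k: "k \<le> N" "real k / N \<le> s" "s - real k / N < 1 / N"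
      using grid_point_below[OF N(1) s] .
    have "f n s < \<epsilon>"
    proof (cases "real k / N = s")
      case False
      with k s have "f n s \<le> f n (real k / N) + \<omega> (s - real k / N)"
        by (intro equicontinuous) auto
      also have "\<dots> < \<epsilon> / 2 + \<epsilon> / 2"
      proof (rule add_strict_mono)
        show "f n (real k / N) < \<epsilon> / 2"
          using small k by simp
        show "\<omega> (s - real k / N) < \<epsilon> / 2"
          using \<eta>[of "s - real k / N"] k N False by simp
      qed
      finally show ?thesis by simp
    qed (use small k \<open>0 < \<epsilon>\<close> in force)
    then show "dist (f n s) 0 < \<epsilon>"
      using nonneg[OF s] by simp
  qed
qed

section \<open>The functions \<open>zeta\<close> and \<open>phi_p\<close>\<close>

definition zeta_integrand :: "real \<Rightarrow> real" where
  "zeta_integrand u = sqrt (ln (1 + 1 / u\<^sup>2) / u)"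

lemma zeta_eq_integral: "zeta x = 1 / (2 * sqrt 2) * integral {0..x} zeta_integrand"
  by (simp add: zeta_def zeta_integrand_def[abs_def])

lemma zeta_integrand_nonneg: "0 \<le> u \<Longrightarrow> 0 \<le> zeta_integrand u"
  unfolding zeta_integrand_def by (intro real_sqrt_ge_zero divide_nonneg_nonneg) auto

text \<open>The singularity at \<open>0\<close> is integrable: \<open>ln (1 + u\<^sup>-\<^sup>2) \<le> ln 2 - 2 ln u \<le> 5 / \<surd>u\<close>.\<close>
lemma zeta_integrand_le_powr:
  assumes u: "0 < u" "u \<le> 1"
  shows "zeta_integrand u \<le> sqrt 5 * u powr (-3/4)"
proof -
  define v where "v = 1 / sqrt u"
  have "1 \<le> v"
    using u by (simp add: v_def real_sqrt_le_1_iff)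
  have "u\<^sup>2 \<le> 1"
    using u by (simp add: power_le_one)
  then have "1 \<le> 1/u\<^sup>2"
    using u by simp
  then have "ln (1 + 1/u\<^sup>2) \<le> ln (2/u\<^sup>2)"
    by (intro ln_mono) auto
  also have "\<dots> = ln 2 - 2 * ln u"
    using u by (simp add: ln_div ln_realpow)
  also have "\<dots> \<le> 5 * v"
  proof -
    have "ln v = - ln u / 2"
      using u by (simp add: v_def ln_div ln_sqrt)
    moreover have "ln v \<le> v"
      using \<open>1 \<le> v\<close> ln_le_minus_one[of v] by simp
    ultimately show ?thesis
      using \<open>1 \<le> v\<close> ln_2_less_1 by simp
  qed
  finally have "zeta_integrand u \<le> sqrt (5 * (v / u))"
    using u by (simp add: zeta_integrand_def divide_right_mono)
  also have "v / u = u powr (-3/2)"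
  proof -
    have "u powr (3/2) = u powr (1 + 1/2)"
      by simp
    also have "\<dots> = u powr 1 * u powr (1/2)"
      by (rule powr_add)
    also have "\<dots> = u * sqrt u"
      using u by (simp add: powr_half_sqrt)
    finally have "u powr (3/2) = u * sqrt u" .
    then show ?thesis
      using u by (simp add: v_def powr_minus_divide powr_half_sqrt mult.commute)
  qed
  also have "sqrt (5 * u powr (-3/2)) = sqrt 5 * u powr (-3/4)"
    using u by (simp add: real_sqrt_mult powr_half_sqrt[symmetric] powr_powr)
  finally show ?thesis .
qed

lemma continuous_on_zeta_integrand: "continuous_on {0<..1} zeta_integrand"
proof -
  have "1 + 1 / u\<^sup>2 \<noteq> 0" for u :: real
    using add_pos_nonneg[of 1 "1 / u\<^sup>2"] by simp
  then show ?thesis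
    unfolding zeta_integrand_def[abs_def] by (intro continuous_intros) auto
qed

lemma zeta_integrand_integrable_on:
  assumes "0 \<le> a" "b \<le> 1"
  shows "zeta_integrand integrable_on {a..b}"
proof -
  have "(\<lambda>u. sqrt 5 * u powr (-3/4)) integrable_on {0<..(1::real)}"
    using integrable_cmul[OF integrable_on_powr_from_0'[of "-3/4" 1], of "sqrt 5"] by simp
  then have "zeta_integrand absolutely_integrable_on {0<..1}"
    by (intro measurable_bounded_by_integrable_imp_absolutely_integrable
        [OF continuous_imp_measurable_on_sets_lebesgue[OF continuous_on_zeta_integrand],
          where g="\<lambda>u. sqrt 5 * u powr (-3/4)"])
      (auto simp: zeta_integrand_nonneg dest: zeta_integrand_le_powr)
  then have "zeta_integrand integrable_on {0<..1}"
    by (simp add: absolutely_integrable_on_def)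
  then have "zeta_integrand integrable_on {0..1}"
    by (rule integrable_spike_set) (auto intro: negligible_subset[of "{0}"])
  then show ?thesis
    by (rule integrable_on_subinterval) (use assms in auto)
qed

lemma zeta_mono: "0 \<le> x \<Longrightarrow> x \<le> y \<Longrightarrow> y \<le> 1 \<Longrightarrow> zeta x \<le> zeta y"
  unfolding zeta_eq_integral
  by (intro mult_left_mono integral_subset_le zeta_integrand_integrable_on)
    (auto simp: zeta_integrand_nonneg)

lemma zeta_pos:
  assumes "0 < x" "x \<le> 1"
  shows "0 < zeta x"
proof -
  have lower: "((\<lambda>u. sqrt (ln 2) * u powr 1) has_integral (sqrt (ln 2) * (x powr 2 / 2))) {0..x}"
    using has_integral_mult_right[OF has_integral_powr_from_0[of 1 x]] assms by simp
  have below: "sqrt (ln 2) * u powr 1 \<le> zeta_integrand u" if u: "u \<in> {0..x}" for u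
  proof (cases "u = 0")
    case False
    with u assms have "0 < u" "u \<le> 1" by auto
    then have "2 \<le> 1 + 1/u\<^sup>2"
      by (simp add: power_le_one)
    then have "ln 2 \<le> ln (1 + 1/u\<^sup>2)"
      by (intro ln_mono) auto
    also have "\<dots> \<le> ln (1 + 1/u\<^sup>2) / u"
      using \<open>0 < u\<close> \<open>u \<le> 1\<close> \<open>2 \<le> 1 + 1/u\<^sup>2\<close> by (simp add: le_divide_eq mult_left_le)
    finally have "ln 2 \<le> ln (1 + 1/u\<^sup>2) / u" .
    then have "sqrt (ln 2) \<le> zeta_integrand u"
      by (simp add: zeta_integrand_def)
    moreover have "sqrt (ln 2) * u \<le> sqrt (ln 2)"
      using \<open>u \<le> 1\<close> by (intro mult_left_le) auto
    ultimately have "sqrt (ln 2) * u \<le> zeta_integrand u"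
      by linarith
    then show ?thesis using \<open>0 < u\<close> by simp
  qed (simp add: zeta_integrand_def)
  have "sqrt (ln 2) * (x powr 2 / 2) \<le> integral {0..x} zeta_integrand"
    by (rule has_integral_le[OF lower integrable_integral[OF zeta_integrand_integrable_on]])
      (use assms below in auto)
  moreover have "0 < sqrt (ln 2) * (x powr 2 / 2)"
    using assms by simp
  ultimately show ?thesis
    unfolding zeta_eq_integral by simp
qed

lemma zeta_nonneg: "0 \<le> x \<Longrightarrow> x \<le> 1 \<Longrightarrow> 0 \<le> zeta x"
  using zeta_pos[of x] by (cases "x = 0") (auto simp: zeta_def)

lemma convex_majorant_bounds:
  assumes h: "h \<in> {0..1}" and bound: "\<And>y. y \<in> {0..1} \<Longrightarrow> f y \<le> c"
  shows "f h \<le> convex_majorant f h" and "convex_majorant f h \<le> c"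
proof -
  let ?S = "{g h | g. convex_on {0..1} g \<and> (\<forall>y\<in>{0..1}. f y \<le> g y)}"
  have c: "c \<in> ?S"
    using bound by (auto intro!: exI[of _ "\<lambda>_. c"] simp: convex_on_const)
  have lower: "f h \<le> z" if "z \<in> ?S" for z
    using that h by auto
  show "f h \<le> convex_majorant f h"
    unfolding convex_majorant_def using c lower by (intro cInf_greatest) auto
  show "convex_majorant f h \<le> c"
    unfolding convex_majorant_def using c lower by (intro cInf_lower bdd_belowI)
qed

lemma phi_p_pos:
  assumes "0 < p" "0 < h" "h \<le> 1"
  shows "0 < phi_p p h"
proof -
  have "zeta y powr p \<le> zeta 1 powr p" if "y \<in> {0..1}" for y
    using that assms by (intro powr_mono2 zeta_nonneg zeta_mono) auto
  then have "zeta h powr p \<le> convex_majorant (\<lambda>y. zeta y powr p) h"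
    using assms by (intro convex_majorant_bounds(1)) auto
  moreover have "0 < zeta h powr p"
    using zeta_pos[of h] assms by simp
  ultimately have "0 < convex_majorant (\<lambda>y. zeta y powr p) h"
    by linarith
  then show ?thesis
    by (simp add: phi_p_def)
qed

lemma phi_p_le_zeta_1:
  assumes "0 < p" "0 \<le> h" "h \<le> 1"
  shows "phi_p p h \<le> zeta 1"
proof -
  have bound: "zeta y powr p \<le> zeta 1 powr p" if "y \<in> {0..1}" for y
    using that assms by (intro powr_mono2 zeta_nonneg zeta_mono) auto
  have "zeta h powr p \<le> convex_majorant (\<lambda>y. zeta y powr p) h"
    using assms bound by (intro convex_majorant_bounds(1)) auto
  then have "0 \<le> convex_majorant (\<lambda>y. zeta y powr p) h"
    by (rule order.trans[OF powr_ge_zero])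
  then have "phi_p p h \<le> (zeta 1 powr p) powr (1 / p)"
    unfolding phi_p_def using assms convex_majorant_bounds(2)[of h, OF _ bound]
    by (intro powr_mono2) auto
  also have "\<dots> = zeta 1"
    using assms zeta_nonneg[of 1] by (simp add: powr_powr)
  finally show ?thesis .
qed

section \<open>The class \<open>Xi p\<close>\<close>

lemma Xi_pos:
  assumes "Xi p \<phi>" "0 < p" "0 < h" "h \<le> 1"
  shows "0 < \<phi> h"
proof -
  have "\<phi> 0 powr p < \<phi> h powr p"
    using assms by (auto simp: Xi_def dest: strict_mono_onD[of _ _ 0 h])
  with assms show ?thesis
    by (auto simp: Xi_def order.order_iff_strict)
qed

lemma Xi_mono_on:
  assumes "Xi p \<phi>" "0 < p"
  shows "mono_on {0..1} \<phi>"
proof (rule mono_onI)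
  fix a b :: real assume ab: "a \<in> {0..1}" "b \<in> {0..1}" "a \<le> b"
  then have "0 \<le> \<phi> b" and "\<phi> a powr p \<le> \<phi> b powr p"
    using assms(1) strict_mono_on_leD[of "{0..1}" "\<lambda>x. \<phi> x powr p" a b] by (auto simp: Xi_def)
  then show "\<phi> a \<le> \<phi> b"
    using powr_less_mono2[OF \<open>0 < p\<close> \<open>0 \<le> \<phi> b\<close>, of "\<phi> a"] by fastforce
qed

lemma Xi_eventually_pos:
  assumes "Xi p \<phi>" "0 < p"
  shows "\<forall>\<^sub>F h in at_right 0. 0 < \<phi> h"
  unfolding eventually_at_right_field
  using Xi_pos[OF assms] by (intro exI[of _ 1]) auto

text \<open>Convexity of \<open>\<phi>\<^sup>p\<close> with \<open>\<phi> 0 = 0\<close> gives \<open>\<phi> h \<le> (h \<phi>(1)\<^sup>p)\<^sup>1\<^sup>/\<^sup>p\<close>.\<close>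
lemma Xi_tendsto_zero:
  assumes X: "Xi p \<phi>" and "0 < p"
  shows "(\<phi> \<longlongrightarrow> 0) (at_right 0)"
proof (rule tendsto_sandwich[where f="\<lambda>_. 0" and h="\<lambda>h. (h * \<phi> 1 powr p) powr (1/p)"])
  have unit: "\<forall>\<^sub>F h in at_right (0::real). 0 < h \<and> h \<le> 1"
    by (auto simp: eventually_at_right_field intro: exI[of _ 1])
  show "\<forall>\<^sub>F h in at_right 0. 0 \<le> \<phi> h"
    using unit by eventually_elim (use X in \<open>auto simp: Xi_def\<close>)
  show "\<forall>\<^sub>F h in at_right 0. \<phi> h \<le> (h * \<phi> 1 powr p) powr (1/p)"
    using unit
  proof eventually_elim
    case (elim h)
    have "\<phi> ((1 - h) *\<^sub>R 0 + h *\<^sub>R 1) powr p \<le> (1 - h) * \<phi> 0 powr p + h * \<phi> 1 powr p"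
      using X elim by (intro convex_onD) (auto simp: Xi_def)
    then have "(\<phi> h powr p) powr (1/p) \<le> (h * \<phi> 1 powr p) powr (1/p)"
      using X \<open>0 < p\<close> by (intro powr_mono2) (auto simp: Xi_def)
    then show ?case
      using X elim \<open>0 < p\<close> by (simp add: Xi_def powr_powr)
  qed
  show "((\<lambda>h. (h * \<phi> 1 powr p) powr (1/p)) \<longlongrightarrow> 0) (at_right 0)"
    using \<open>0 < p\<close> unit
    by (intro tendsto_zero_powrI tendsto_eq_intros) (auto intro: tendsto_ident_at elim: eventually_mono)
qed simp

lemma ccdist_le_of_hnorm_le:
  assumes "hnorm \<psi> y \<le> ereal B" and "0 \<le> s" "s < t" "t \<le> 1" and "0 < \<psi> (t - s)"
  shows "ccdist (y s) (y t) \<le> B * \<psi> (t - s)"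
proof -
  have "ereal (ccnorm (incr y s t) / \<psi> (t - s)) \<le> hnorm \<psi> y"
    unfolding hnorm_def using assms(2-4) by (intro SUP_upper2[where i="(s, t)"]) auto
  also have "\<dots> \<le> ereal B"
    by (rule assms(1))
  finally show ?thesis
    using assms(5) by (simp add: pos_divide_le_eq ccnorm_incr_eq_ccdist)
qed

lemma uniform_limit_ccdist_of_holder:
  fixes ys :: "nat \<Rightarrow> real \<Rightarrow> ('d::finite) grp" and y :: "real \<Rightarrow> 'd grp"
  assumes in_range: "\<And>n t. t \<in> {0..1} \<Longrightarrow> ys n t \<in> range word_prod"
      "\<And>t. t \<in> {0..1} \<Longrightarrow> y t \<in> range word_prod"
    and holder: "\<And>n s t. 0 \<le> s \<Longrightarrow> s < t \<Longrightarrow> t \<le> 1 \<Longrightarrow> ccdist (ys n s) (ys n t) \<le> \<omega> (t - s)"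
      "\<And>s t. 0 \<le> s \<Longrightarrow> s < t \<Longrightarrow> t \<le> 1 \<Longrightarrow> ccdist (y s) (y t) \<le> \<omega> (t - s)"
    and modulus: "(\<omega> \<longlongrightarrow> 0) (at_right 0)"
    and pointwise: "\<And>t. t \<in> {0..1} \<Longrightarrow> (\<lambda>n. ccdist (ys n t) (y t)) \<longlonglongrightarrow> 0"
  shows "uniform_limit {0..1} (\<lambda>n t. ccdist (ys n t) (y t)) (\<lambda>_. 0) sequentially"
proof (rule uniform_limit_zero_of_equicontinuous[where \<omega>="\<lambda>h. 2 * \<omega> h"])
  fix n :: nat and r s :: real assume rs: "0 \<le> r" "r < s" "s \<le> 1"
  then have r: "r \<in> {0..1}" and s: "s \<in> {0..1}" by auto
  have "ccdist (ys n s) (y s) \<le> ccdist (ys n s) (ys n r) + ccdist (ys n r) (y r) + ccdist (y r) (y s)"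
    using ccdist_triangle[of "ys n s" "ys n r" "y s"] ccdist_triangle[of "ys n r" "y r" "y s"]
      in_range r s by simp
  also have "ccdist (ys n s) (ys n r) = ccdist (ys n r) (ys n s)"
    using in_range r s by (intro ccdist_commute)
  finally show "ccdist (ys n s) (y s) \<le> ccdist (ys n r) (y r) + 2 * \<omega> (s - r)"
    using holder(1)[of r s n] holder(2)[of r s] rs by simp
next
  show "((\<lambda>h. 2 * \<omega> h) \<longlongrightarrow> 0) (at_right 0)"
    using tendsto_mult_left[OF modulus, of 2] by simp
qed (use in_range pointwise in \<open>auto intro: ccdist_nonneg\<close>)

lemma d_phi_nonneg:
  assumes "\<And>t. t \<in> {0..1} \<Longrightarrow> y t \<in> range word_prod" "\<And>t. t \<in> {0..1} \<Longrightarrow> z t \<in> range word_prod"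
    and "0 < \<phi> 1"
  shows "0 \<le> d_phi \<phi> y z"
proof -
  have "0 \<le> ereal (ccnorm (gmult (ginv (incr y 0 1)) (incr z 0 1)) / \<phi> (1 - 0))"
    using assms unfolding incr_def
    by (simp add: ccnorm_nonneg gmult_in_range_word_prod ginv_in_range_word_prod)
  also have "\<dots> \<le> d_phi \<phi> y z"
    unfolding d_phi_def by (rule SUP_upper2[where i="(0, 1)"]) auto
  finally show ?thesis .
qed

text \<open>Short increments are controlled by the Holder modulus \<open>\<omega>\<close>, long ones (length \<open>\<ge> \<eta>\<close>)
  by the uniform distance \<open>u\<close> between the paths.\<close>
lemma d_phi_le_of_uniformly_close:
  fixes y z :: "real \<Rightarrow> ('d::finite) grp"
  assumes in_range: "\<And>t. t \<in> {0..1} \<Longrightarrow> y t \<in> range word_prod"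
      "\<And>t. t \<in> {0..1} \<Longrightarrow> z t \<in> range word_prod"
    and \<phi>_pos: "\<And>h. 0 < h \<Longrightarrow> h \<le> 1 \<Longrightarrow> 0 < \<phi> h" and \<phi>_mono: "mono_on {0..1} \<phi>"
    and holder: "\<And>s t. 0 \<le> s \<Longrightarrow> s < t \<Longrightarrow> t \<le> 1 \<Longrightarrow> ccdist (y s) (y t) \<le> \<omega> (t - s)"
      "\<And>s t. 0 \<le> s \<Longrightarrow> s < t \<Longrightarrow> t \<le> 1 \<Longrightarrow> ccdist (z s) (z t) \<le> \<omega> (t - s)"
    and bounded: "\<And>h. 0 < h \<Longrightarrow> h \<le> 1 \<Longrightarrow> \<omega> h \<le> K"
    and \<eta>: "0 < \<eta>" "\<eta> \<le> 1"
    and short: "\<And>h. 0 < h \<Longrightarrow> h < \<eta> \<Longrightarrow> 2 * \<omega> h \<le> c * \<phi> h"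
    and close: "\<And>t. t \<in> {0..1} \<Longrightarrow> ccdist (y t) (z t) \<le> u"
    and long: "2 * u + 4 * sqrt (u * K) \<le> c * \<phi> \<eta>"
  shows "d_phi \<phi> y z \<le> ereal c"
  unfolding d_phi_def
proof (rule SUP_least, clarify)
  fix s t :: real assume st: "0 \<le> s" "s < t" "t \<le> 1"
  then have s: "s \<in> {0..1}" and t: "t \<in> {0..1}" by auto
  let ?D = "ccnorm (gmult (ginv (incr y s t)) (incr z s t))"
  have "?D \<le> c * \<phi> (t - s)"
  proof (cases "t - s < \<eta>")
    case True
    have "?D \<le> ccdist (y s) (y t) + ccdist (z s) (z t)"
      unfolding incr_def using in_range s t by (intro ccnorm_increment_difference_le_sum)
    also have "\<dots> \<le> 2 * \<omega> (t - s)"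
      using holder[OF st] by simp
    also have "\<dots> \<le> c * \<phi> (t - s)"
      using short True st by simp
    finally show ?thesis .
  next
    case False
    have u: "0 \<le> ccdist (y s) (z s)" "ccdist (y s) (z s) \<le> u" "ccdist (y t) (z t) \<le> u"
      using in_range close s t by (auto intro: ccdist_nonneg)
    have K: "0 \<le> ccdist (y s) (y t)" "ccdist (y s) (y t) \<le> K"
      using in_range s t holder(1)[OF st] bounded[of "t - s"] st by (auto intro: ccdist_nonneg)
    have "?D \<le> ccdist (y s) (z s) + 4 * sqrt (ccdist (y s) (z s) * ccdist (y s) (y t))
        + ccdist (y t) (z t)"
      unfolding incr_def using in_range s t by (intro ccnorm_increment_difference_le)
    also have "\<dots> \<le> 2 * u + 4 * sqrt (u * K)"
    proof -
      have "ccdist (y s) (z s) * ccdist (y s) (y t) \<le> u * K"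
        using u K by (intro mult_mono) auto
      then have "sqrt (ccdist (y s) (z s) * ccdist (y s) (y t)) \<le> sqrt (u * K)"
        by (rule real_sqrt_le_mono)
      then show ?thesis
        using u by linarith
    qed
    also have "\<dots> \<le> c * \<phi> \<eta>"
      by (rule long)
    also have "\<dots> \<le> c * \<phi> (t - s)"
    proof -
      have "0 \<le> c * \<phi> \<eta>"
        using long u K by (smt (verit) real_sqrt_ge_zero zero_le_mult_iff)
      then have "0 \<le> c"
        using \<phi>_pos[OF \<eta>] by (simp add: zero_le_mult_iff)
      with \<phi>_mono False \<eta> st show ?thesis
        by (intro mult_left_mono mono_onD[OF \<phi>_mono]) auto
    qed
    finally show ?thesis .
  qed
  then show "ereal (?D / \<phi> (t - s)) \<le> ereal c"
    using \<phi>_pos[of "t - s"] st by (simp add: pos_divide_le_eq)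
qed

lemma d_phi_tendsto_zero_of_uniform_limit:
  fixes ys :: "nat \<Rightarrow> real \<Rightarrow> ('d::finite) grp" and y :: "real \<Rightarrow> 'd grp"
  assumes in_range: "\<And>n t. t \<in> {0..1} \<Longrightarrow> ys n t \<in> range word_prod"
      "\<And>t. t \<in> {0..1} \<Longrightarrow> y t \<in> range word_prod"
    and \<phi>_pos: "\<And>h. 0 < h \<Longrightarrow> h \<le> 1 \<Longrightarrow> 0 < \<phi> h" and \<phi>_mono: "mono_on {0..1} \<phi>"
    and holder: "\<And>n s t. 0 \<le> s \<Longrightarrow> s < t \<Longrightarrow> t \<le> 1 \<Longrightarrow> ccdist (ys n s) (ys n t) \<le> \<omega> (t - s)"
      "\<And>s t. 0 \<le> s \<Longrightarrow> s < t \<Longrightarrow> t \<le> 1 \<Longrightarrow> ccdist (y s) (y t) \<le> \<omega> (t - s)"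
    and bounded: "\<And>h. 0 < h \<Longrightarrow> h \<le> 1 \<Longrightarrow> \<omega> h \<le> K"
    and ratio: "((\<lambda>h. \<omega> h / \<phi> h) \<longlongrightarrow> 0) (at_right 0)"
    and uniform: "uniform_limit {0..1} (\<lambda>n t. ccdist (ys n t) (y t)) (\<lambda>_. 0) sequentially"
  shows "(\<lambda>n. d_phi \<phi> (ys n) y) \<longlonglongrightarrow> 0"
proof (rule ereal_LIMSEQ_zeroI)
  show "0 \<le> d_phi \<phi> (ys n) y" for n
    using in_range \<phi>_pos[of 1] by (intro d_phi_nonneg) auto
next
  fix c :: real assume "0 < c"
  obtain b where "0 < b" and b: "\<And>h. 0 < h \<Longrightarrow> h < b \<Longrightarrow> \<omega> h / \<phi> h < c / 2"
    using order_tendstoD(2)[OF ratio, of "c / 2"] \<open>0 < c\<close> by (auto simp: eventually_at_right_field)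
  define \<eta> where "\<eta> = min b 1"
  have \<eta>: "0 < \<eta>" "\<eta> \<le> 1"
    using \<open>0 < b\<close> by (auto simp: \<eta>_def)
  have short: "2 * \<omega> h \<le> c * \<phi> h" if "0 < h" "h < \<eta>" for h
    using b[of h] \<phi>_pos[of h] that by (simp add: \<eta>_def pos_divide_less_eq)
  have "((\<lambda>u. 2 * u + 4 * sqrt (u * K)) \<longlongrightarrow> 2 * 0 + 4 * sqrt (0 * K)) (at_right 0)"
    by (intro tendsto_intros)
  then have "\<forall>\<^sub>F u in at_right 0. 2 * u + 4 * sqrt (u * K) < c * \<phi> \<eta>"
    using \<open>0 < c\<close> \<phi>_pos[OF \<eta>] by (intro order_tendstoD(2)) auto
  then obtain b' where "0 < b'" and b': "\<And>u. 0 < u \<Longrightarrow> u < b' \<Longrightarrow> 2 * u + 4 * sqrt (u * K) < c * \<phi> \<eta>"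
    by (auto simp: eventually_at_right_field)
  define u where "u = b' / 2"
  have "0 < u" and long: "2 * u + 4 * sqrt (u * K) \<le> c * \<phi> \<eta>"
    using \<open>0 < b'\<close> b'[of u] by (auto simp: u_def)
  have "\<forall>\<^sub>F n in sequentially. \<forall>t\<in>{0..1}. ccdist (ys n t) (y t) \<le> u"
    using uniform_limitD[OF uniform \<open>0 < u\<close>] by eventually_elim auto
  then show "\<forall>\<^sub>F n in sequentially. d_phi \<phi> (ys n) y \<le> ereal c"
  proof eventually_elim
    case (elim n)
    show ?case
      by (rule d_phi_le_of_uniformly_close[OF in_range(1)[where n=n] in_range(2) \<phi>_pos \<phi>_mono
            holder(1)[where n=n] holder(2) bounded \<eta> short _ long]) (use elim in auto)
  qed
qed

theorem mainTheorem14: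
  fixes p :: real and \<phi> :: "real \<Rightarrow> real"
    and xs :: "nat \<Rightarrow> real \<Rightarrow> ('d::finite) grp" and x :: "real \<Rightarrow> 'd grp"
  assumes "CARD('d) \<ge> 2"
    and "2 < p" "p < 3"
    and "Xi p \<phi>"
    and "((\<lambda>t. phi_p p t / \<phi> t) \<longlongrightarrow> 0) (at_right 0)"
    and "((\<lambda>t. sqrt (- t * ln t) / \<phi> t) \<longlongrightarrow> 0) (at_right 0)"
    and "\<And>n. C0path (xs n)" and "C0path x"
    and "\<And>t. t \<in> {0..1} \<Longrightarrow> (\<lambda>n. ccdist (xs n t) (x t)) \<longlonglongrightarrow> 0"
    and "\<exists>B. \<forall>n. hnorm (phi_p p) (xs n) \<le> ereal B"
  shows "(\<lambda>n. d_phi \<phi> (xs n) x) \<longlonglongrightarrow> 0"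
proof -
  have "0 < p"
    using assms(2) by simp
  have in_range: "\<And>n t. t \<in> {0..1} \<Longrightarrow> xs n t \<in> range word_prod"
      "\<And>t. t \<in> {0..1} \<Longrightarrow> x t \<in> range word_prod"
    using assms(7,8) by (auto simp: C0path_def intro: inG_imp_in_range_word_prod)
  obtain B where B: "\<And>n. hnorm (phi_p p) (xs n) \<le> ereal B"
    using assms(10) by blast
  define \<omega> where "\<omega> h = B * phi_p p h" for h
  have holder_xs: "ccdist (xs n s) (xs n t) \<le> \<omega> (t - s)" if "0 \<le> s" "s < t" "t \<le> 1" for n s t
    unfolding \<omega>_def using B that \<open>0 < p\<close> by (intro ccdist_le_of_hnorm_le phi_p_pos) auto
  have holder_x: "ccdist (x s) (x t) \<le> \<omega> (t - s)" if st: "0 \<le> s" "s < t" "t \<le> 1" for s t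
  proof (rule ccdist_le_of_tendsto[where gs="\<lambda>n. xs n s" and hs="\<lambda>n. xs n t"])
    show "(\<lambda>n. ccdist (xs n s) (x s)) \<longlonglongrightarrow> 0" "(\<lambda>n. ccdist (xs n t) (x t)) \<longlonglongrightarrow> 0"
      using st by (simp_all add: assms(9))
    show "ccdist (xs n s) (xs n t) \<le> \<omega> (t - s)" for n
      using holder_xs[OF st] .
  qed (use st in_range in simp_all)
  have ratio: "((\<lambda>h. \<omega> h / \<phi> h) \<longlongrightarrow> 0) (at_right 0)"
    using tendsto_mult_left[OF assms(5), of B] by (simp add: \<omega>_def)
  have "\<forall>\<^sub>F h in at_right 0. \<phi> h \<noteq> 0"
    using Xi_eventually_pos[OF assms(4) \<open>0 < p\<close>] by eventually_elim simp
  then have "(\<omega> \<longlongrightarrow> 0) (at_right 0)"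
    by (rule tendsto_zero_of_ratio_tendsto_zero[OF ratio Xi_tendsto_zero[OF assms(4) \<open>0 < p\<close>]])
  then have "uniform_limit {0..1} (\<lambda>n t. ccdist (xs n t) (x t)) (\<lambda>_. 0) sequentially"
    using in_range holder_xs holder_x assms(9) by (intro uniform_limit_ccdist_of_holder)
  moreover have "\<omega> h \<le> \<bar>B\<bar> * zeta 1" if "0 < h" "h \<le> 1" for h
    using that \<open>0 < p\<close> mult_mono[of B "\<bar>B\<bar>" "phi_p p h" "zeta 1"]
    by (simp add: \<omega>_def phi_p_le_zeta_1 less_imp_le[OF phi_p_pos])
  ultimately show ?thesis
    using in_range Xi_pos[OF assms(4) \<open>0 < p\<close>] Xi_mono_on[OF assms(4) \<open>0 < p\<close>] holder_xs holder_x ratio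
    by (intro d_phi_tendsto_zero_of_uniform_limit[where \<omega>=\<omega> and K="\<bar>B\<bar> * zeta 1"])
qed

end
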